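(* Let $X,a,b$ be variables, let $C_k=\frac1{k+1}\binom{2k}{k}$ denote the Catalan numbers, and let $U_n(x)$ be the Chebyshev polynomials of the second kind, defined by $\sum_{n\ge0}U_n(x)z^n=\frac1{1-2xz+z^2}$, with $U_{-1}(x)=0$. Then for all positive integers $n$, $$\det_{0\le i,j\le n-1}\left(X(-2a)^{i+j+1}+\sum_{k=0}^{\lfloor(i+j)/2\rfloor}(-2a)^{i+j-2k}C_k-b\Big(X(-2a)^{i+j}+\sum_{k=0}^{\lfloor(i+j-1)/2\rfloor}(-2a)^{i+j-2k-1}C_k\Big)\right)$$ $$=U_{n-1}(b/2)\big(XU_n(-a)+U_{n-1}(-a)\big)-U_n(b/2)\big(XU_{n-1}(-a)+U_{n-2}(-a)\big).$$
   Context: An empty sum equals $0$. *)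

theory Defs
  imports "Jordan_Normal_Form.Determinant" "HOL-Computational_Algebra.Formal_Power_Series"
begin

definition catalan :: "nat \<Rightarrow> 'a :: field_char_0" where
  "catalan k = of_nat ((2*k) choose k) / of_nat (k+1)"

definition chebU :: "int \<Rightarrow> 'a :: field_char_0 \<Rightarrow> 'a" where
  "chebU n x = (if n < 0 then 0 else
     fps_nth (inverse (1 - fps_const (2*x) * fps_X + fps_X^2)) (nat n))"

end

theory Submission
  imports Defs
begin

(*
  Let A be the adjacency operator of the path graph 0 - 1 - 2 - ... acting on sequences, and B
  the lower unitriangular matrix of ballot numbers, B(i,l) = (A^i)(0,l). If N commutes with A,
  then (B N B^T)(i,j) = (A^i N A^j)(0,0) = (N A^(i+j))(0,0), so B N B^T is the Hankel matrix of
  h(m) = sum_l B(m,l) N(0,l), and the Hankel determinant equals det N.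

  With x = -a and W(k) = X U(k)(x) + U(k-1)(x), the matrix N = I + (2x - b) G, where
  G(k,l) = U(min k l)(x) W(max k l), commutes with A because both U(x) and W satisfy the
  Chebyshev recurrence, which is an eigenvalue equation for A. Since B(2k,0) is the Catalan number
  C(k) and B(2k+1,0) = 0, its h(m) is the Hankel entry of the theorem.

  Row operations following the recurrence at x (using the Wronskian W(k+1) U(k) - U(k+1) W(k) = 1)
  turn the rows k >= 1 of N into those of the Toeplitz matrix of 1 - b z + z^2, which the Toeplitz
  matrix of U(n)(b/2) inverts. This leaves det N = sum_j N(0,j) U(j)(b/2), a telescoping sum.
*)

section \<open>Chebyshev polynomials of the second kind\<close>

lemma chebU_neg [simp]: "n < 0 \<Longrightarrow> chebU n x = 0"
  by (simp add: chebU_def)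

lemma chebU_three_term:
  fixes x :: "'a::field_char_0"
  shows "chebU (m + 1) x - 2*x*chebU m x + chebU (m - 1) x = (if m = -1 then 1 else 0)"
proof (cases "m < -1")
  case True
  then show ?thesis by simp
next
  case False
  then obtain n where m: "m = int n - 1"
    by (intro that[of "nat (m + 1)"]) simp
  define Q :: "'a fps" where "Q = 1 - fps_const (2*x) * fps_X + fps_X^2"
  define F where "F = inverse Q"
  have "fps_nth Q 0 = 1"
    by (simp add: Q_def power2_eq_square)
  then have "F * Q = 1"
    unfolding F_def by (intro inverse_mult_eq_1) simp
  have "F * Q = F - fps_const (2*x) * (fps_X * F) + fps_X^2 * F"
    unfolding Q_def by (simp add: algebra_simps)
  then have "fps_nth (F * Q) n = fps_nth F n - 2*x * (if n = 0 then 0 else fps_nth F (n - 1))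
      + (if n < 2 then 0 else fps_nth F (n - 2))"
    by (simp add: fps_X_power_mult_nth fps_X_mult_nth)
  with \<open>F * Q = 1\<close> have coeff: "fps_nth F n - 2*x * (if n = 0 then 0 else fps_nth F (n - 1))
      + (if n < 2 then 0 else fps_nth F (n - 2)) = (if n = 0 then 1 else 0)"
    by simp
  have F: "chebU j x = (if j < 0 then 0 else fps_nth F (nat j))" for j
    by (simp add: chebU_def F_def Q_def)
  have "chebU (int n) x - 2*x * chebU (int n - 1) x + chebU (int n - 2) x = (if n = 0 then 1 else 0)"
    using coeff by (cases "n < 2") (auto simp: F nat_diff_distrib)
  then show ?thesis
    by (simp add: m algebra_simps)
qed

lemma chebU_0 [simp]: "chebU 0 x = 1"
  using chebU_three_term[of "-1" x] by simp

lemma chebU_1: "chebU 1 x = 2*x"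
  using chebU_three_term[of 0 x] by simp

lemma chebU_rec: "m \<ge> 0 \<Longrightarrow> chebU (m + 1) x = 2*x*chebU m x - chebU (m - 1) x"
  using chebU_three_term[of m x] by (simp add: algebra_simps)

section \<open>Ballot numbers\<close>

text \<open>\<open>ballot i l\<close> counts the paths of \<open>i\<close> unit steps up or down from height 0 to height \<open>l\<close> that never go below 0.\<close>

fun ballot :: "nat \<Rightarrow> nat \<Rightarrow> int" where
  "ballot 0 l = (if l = 0 then 1 else 0)"
| "ballot (Suc i) l = (if l = 0 then 0 else ballot i (l - 1)) + ballot i (Suc l)"

definition ballot_binom :: "nat \<Rightarrow> nat \<Rightarrow> int" where
  "ballot_binom l r = int ((l + 2*r) choose r) - (if r = 0 then 0 else int ((l + 2*r) choose (r - 1)))"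

lemma ballot_binom_Suc_Suc:
  "ballot_binom (Suc l) (Suc r) = ballot_binom l (Suc r) + ballot_binom (Suc (Suc l)) r"
proof (cases r)
  case 0
  then show ?thesis by (simp add: ballot_binom_def)
next
  case (Suc s)
  have "Suc l + 2 * Suc (Suc s) = Suc (l + 2 * Suc (Suc s))"
    and "Suc (Suc l) + 2 * Suc s = l + 2 * Suc (Suc s)" by simp_all
  then show ?thesis
    unfolding ballot_binom_def Suc by simp
qed

lemma ballot_binom_0_Suc: "ballot_binom 0 (Suc r) = ballot_binom 1 r"
proof (cases r)
  case 0
  then show ?thesis by (simp add: ballot_binom_def)
next
  case (Suc s)
  have "Suc (2*r) choose Suc r = Suc (2*r) choose r"
    using binomial_symmetric[of r "Suc (2*r)"] by simp
  moreover have "0 + 2 * Suc r = Suc (Suc (2*r))" and "1 + 2 * r = Suc (2*r)" by simp_all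
  ultimately show ?thesis
    unfolding ballot_binom_def using Suc by simp
qed

lemma ballot_eq_binom: "ballot i l = (if l \<le> i \<and> even (i - l) then ballot_binom l ((i - l) div 2) else 0)"
proof (induction i arbitrary: l)
  case 0
  then show ?case by (simp add: ballot_binom_def)
next
  case (Suc i)
  show ?case
  proof (cases l)
    case 0
    show ?thesis
    proof (cases "even i")
      case True
      then show ?thesis using Suc.IH[of 1] 0 by (cases i) auto
    next
      case False
      then obtain r where "i = Suc (2*r)" by (metis oddE Suc_eq_plus1)
      then show ?thesis using Suc.IH[of 1] 0 ballot_binom_0_Suc[of r] by simp
    qed
  next
    case (Suc l')
    show ?thesis
    proof (cases "l' \<le> i \<and> even (i - l')")
      case True
      then obtain r where r: "i = l' + 2*r" by (metis evenE le_add_diff_inverse)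
      show ?thesis
      proof (cases r)
        case 0
        then show ?thesis using r Suc Suc.IH[of l'] Suc.IH[of "Suc (Suc l')"] by (simp add: ballot_binom_def)
      next
        case (Suc s)
        have "i - l' = 2 * Suc s" "i - Suc (Suc l') = 2 * s" "Suc i - Suc l' = 2 * Suc s" using r Suc by auto
        then show ?thesis using r Suc \<open>l = Suc l'\<close> Suc.IH[of l'] Suc.IH[of "Suc (Suc l')"] ballot_binom_Suc_Suc[of l' s]
          by simp
      qed
    next
      case False
      then show ?thesis using Suc Suc.IH[of l'] Suc.IH[of "Suc (Suc l')"] by auto
    qed
  qed
qed

declare ballot.simps(2) [simp del]

lemma ballot_eq_0: "i < l \<Longrightarrow> ballot i l = 0"
  by (simp add: ballot_eq_binom)

lemma ballot_diag [simp]: "ballot i i = 1"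
  by (simp add: ballot_eq_binom ballot_binom_def)

lemma ballot_odd_0: "ballot (Suc (2*k)) 0 = 0"
  by (simp add: ballot_eq_binom)

lemma ballot_even_0: "of_int (ballot (2*k) 0) = (catalan k :: 'a::field_char_0)"
proof (cases k)
  case 0
  then show ?thesis by (simp add: ballot_eq_binom ballot_binom_def catalan_def)
next
  case (Suc j)
  have "k * (2*k choose k) = (k + 1) * (2*k choose j)"
    using Suc_times_binomial_add[of j k] Suc by (simp add: mult_2)
  then have "(of_nat k * of_nat (2*k choose k) :: 'a) = of_nat (k + 1) * of_nat (2*k choose j)"
    by (metis of_nat_mult)
  then have "(of_nat (k + 1) :: 'a) * (of_nat (2*k choose k) - of_nat (2*k choose j))
      = of_nat (2*k choose k)"
    by (simp add: right_diff_distrib) (simp add: algebra_simps)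
  moreover have "(of_int (ballot (2*k) 0) :: 'a) = of_nat (2*k choose k) - of_nat (2*k choose j)"
    using Suc by (simp add: ballot_eq_binom ballot_binom_def)
  moreover have "(of_nat (k + 1) :: 'a) \<noteq> 0"
    by (metis of_nat_eq_0_iff add_is_0 one_neq_zero)
  ultimately show ?thesis
    unfolding catalan_def by (simp only: eq_divide_eq mult.commute) simp
qed

section \<open>Hankel matrices congruent by the ballot matrix\<close>

text \<open>The adjacency operator of the path graph \<open>0 - 1 - 2 - \<dots>\<close> acting on sequences.\<close>

definition adj_sum :: "(nat \<Rightarrow> 'a::comm_ring_1) \<Rightarrow> nat \<Rightarrow> 'a" where
  "adj_sum g l = g (Suc l) + (if l = 0 then 0 else g (l - 1))"

lemma sum_ballot_Suc:
  fixes g :: "nat \<Rightarrow> 'a::comm_ring_1"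
  shows "(\<Sum>l\<le>Suc j. of_int (ballot (Suc j) l) * g l) = (\<Sum>l\<le>j. of_int (ballot j l) * adj_sum g l)"
proof -
  have "(\<Sum>l\<le>Suc j. of_int (ballot (Suc j) l) * g l)
      = (\<Sum>l\<le>Suc j. (if l = 0 then 0 else of_int (ballot j (l - 1))) * g l)
        + (\<Sum>l\<le>Suc j. of_int (ballot j (Suc l)) * g l)"
    by (auto simp: ballot.simps(2) sum.distrib[symmetric] algebra_simps intro!: sum.cong)
  also have "(\<Sum>l\<le>Suc j. (if l = 0 then 0 else of_int (ballot j (l - 1))) * g l)
      = (\<Sum>l\<le>j. of_int (ballot j l) * g (Suc l))"
    by (subst sum.atMost_Suc_shift) simp
  also have "(\<Sum>l\<le>Suc j. of_int (ballot j (Suc l)) * g l)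
      = (\<Sum>l\<le>Suc j. of_int (ballot j l) * (if l = 0 then 0 else g (l - 1)))"
    by (subst (2) sum.atMost_Suc_shift) (simp add: ballot_eq_0)
  also have "\<dots> = (\<Sum>l\<le>j. of_int (ballot j l) * (if l = 0 then 0 else g (l - 1)))"
    by (simp add: ballot_eq_0)
  finally show ?thesis
    by (simp add: adj_sum_def sum.distrib[symmetric] algebra_simps)
qed

definition ballot0_conv :: "'a::comm_ring_1 \<Rightarrow> nat \<Rightarrow> 'a" where
  "ballot0_conv c m = (\<Sum>i<m. c^(m - 1 - i) * of_int (ballot i 0))"

lemma ballot0_conv_0 [simp]: "ballot0_conv c 0 = 0"
  by (simp add: ballot0_conv_def)

lemma ballot0_conv_Suc: "ballot0_conv c (Suc m) = c * ballot0_conv c m + of_int (ballot m 0)"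
  by (auto simp: ballot0_conv_def sum_distrib_left mult.assoc[symmetric] Suc_diff_Suc
           simp flip: power_Suc intro!: sum.cong)

lemma sum_ballot_adj_eigen:
  fixes g :: "nat \<Rightarrow> 'a::comm_ring_1"
  assumes "\<And>l. adj_sum g l = \<mu> * g l + (if l = 0 then d else 0)"
  shows "(\<Sum>l\<le>m. of_int (ballot m l) * g l) = \<mu>^m * g 0 + d * ballot0_conv \<mu> m"
proof (induction m)
  case 0
  then show ?case by simp
next
  case (Suc m)
  have "(\<Sum>l\<le>Suc m. of_int (ballot (Suc m) l) * g l)
      = (\<Sum>l\<le>m. \<mu> * (of_int (ballot m l) * g l) + (if l = 0 then d * of_int (ballot m 0) else 0))"
    unfolding sum_ballot_Suc by (intro sum.cong) (simp_all add: assms algebra_simps)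
  also have "\<dots> = \<mu> * (\<Sum>l\<le>m. of_int (ballot m l) * g l) + d * of_int (ballot m 0)"
    by (simp add: sum.distrib sum_distrib_left)
  also have "\<dots> = \<mu>^Suc m * g 0 + d * ballot0_conv \<mu> (Suc m)"
    unfolding Suc.IH ballot0_conv_Suc by (simp add: algebra_simps)
  finally show ?case .
qed

lemma sum_catalan_eq_ballot0_conv:
  fixes c :: "'a::field_char_0"
  shows "(\<Sum>k=0..m div 2. c^(m - 2*k) * catalan k) = ballot0_conv c (Suc m)"
proof (induction m)
  case 0
  then show ?case by (simp add: ballot0_conv_def catalan_def)
next
  case (Suc m)
  have shift: "(\<Sum>k=0..m div 2. c^(Suc m - 2*k) * catalan k) = c * (\<Sum>k=0..m div 2. c^(m - 2*k) * catalan k)"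
    by (auto simp: sum_distrib_left Suc_diff_le intro!: sum.cong)
  show ?case
  proof (cases "even m")
    case True
    then obtain q where "m = 2*q" by blast
    then show ?thesis
      using shift Suc.IH by (simp add: ballot0_conv_Suc ballot_odd_0)
  next
    case False
    then obtain q where m: "m = Suc (2*q)" by (metis oddE Suc_eq_plus1)
    then have "Suc m div 2 = Suc (m div 2)" and "Suc m = 2 * Suc q"
      by simp_all
    then show ?thesis
      using shift Suc.IH ballot_even_0[of "Suc q", where 'a='a]
      by (simp add: ballot0_conv_Suc m)
  qed
qed

lemma sum_catalan_odd_eq_ballot0_conv:
  fixes c :: "'a::field_char_0"
  shows "(\<Sum>k\<in>{0..(int m - 1) div 2}. c^(nat (int m - 2*k - 1)) * catalan (nat k)) = ballot0_conv c m"
proof (cases m)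
  case 0
  then show ?thesis by simp
next
  case (Suc m')
  then have "(int m - 1) div 2 = int (m' div 2)"
    by simp
  then have "(\<Sum>k\<in>{0..(int m - 1) div 2}. c^(nat (int m - 2*k - 1)) * catalan (nat k))
      = (\<Sum>k\<in>int ` {0..m' div 2}. c^(nat (int m - 2*k - 1)) * catalan (nat k))"
    by (simp add: image_int_atLeastAtMost)
  also have "\<dots> = (\<Sum>k=0..m' div 2. c^(m' - 2*k) * catalan k)"
    by (subst sum.reindex) (auto simp: Suc intro!: sum.cong arg_cong[where f="\<lambda>x. c^x"])
  finally show ?thesis
    using Suc by (simp add: sum_catalan_eq_ballot0_conv)
qed

lemma sum_mult_sum_swap:
  fixes a b :: "'i \<Rightarrow> 'a::comm_semiring_0"
  shows "(\<Sum>k\<in>A. a k * (\<Sum>l\<in>B. b l * f k l)) = (\<Sum>l\<in>B. b l * (\<Sum>k\<in>A. a k * f k l))"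
proof -
  have "(\<Sum>k\<in>A. a k * (\<Sum>l\<in>B. b l * f k l)) = (\<Sum>k\<in>A. \<Sum>l\<in>B. b l * (a k * f k l))"
    by (simp add: sum_distrib_left mult.left_commute)
  also have "\<dots> = (\<Sum>l\<in>B. \<Sum>k\<in>A. b l * (a k * f k l))"
    by (rule sum.swap)
  finally show ?thesis
    by (simp add: sum_distrib_left)
qed

lemma sum_ballot_bilinear:
  fixes N :: "nat \<Rightarrow> nat \<Rightarrow> 'a::comm_ring_1"
  assumes commute: "\<And>k l. adj_sum (N k) l = adj_sum (\<lambda>k. N k l) k"
  shows "(\<Sum>k\<le>i. of_int (ballot i k) * (\<Sum>l\<le>j. of_int (ballot j l) * N k l))
       = (\<Sum>l\<le>i + j. of_int (ballot (i + j) l) * N 0 l)"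
proof (induction i arbitrary: j)
  case 0
  then show ?case by simp
next
  case (Suc i)
  have "(\<Sum>l\<le>Suc i + j. of_int (ballot (Suc i + j) l) * N 0 l)
      = (\<Sum>k\<le>i. of_int (ballot i k) * (\<Sum>l\<le>Suc j. of_int (ballot (Suc j) l) * N k l))"
    using Suc.IH[of "Suc j"] by simp
  also have "\<dots> = (\<Sum>k\<le>i. of_int (ballot i k) * (\<Sum>l\<le>j. of_int (ballot j l) * adj_sum (\<lambda>k. N k l) k))"
    unfolding sum_ballot_Suc commute ..
  also have "\<dots> = (\<Sum>l\<le>j. of_int (ballot j l) * (\<Sum>k\<le>Suc i. of_int (ballot (Suc i) k) * N k l))"
    unfolding sum_ballot_Suc by (rule sum_mult_sum_swap)
  also have "\<dots> = (\<Sum>k\<le>Suc i. of_int (ballot (Suc i) k) * (\<Sum>l\<le>j. of_int (ballot j l) * N k l))"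
    by (rule sum_mult_sum_swap[symmetric])
  finally show ?case ..
qed

lemma index_mult_mat_mat:
  fixes f g :: "nat \<Rightarrow> nat \<Rightarrow> 'a::comm_ring_1"
  assumes "i < n" "j < n"
  shows "(mat n n (\<lambda>(i, k). f i k) * mat n n (\<lambda>(k, j). g k j)) $$ (i, j) = (\<Sum>k<n. f i k * g k j)"
  using assms by (simp add: scalar_prod_def atLeast0LessThan)

lemma det_lower_unitriangular:
  assumes "A \<in> carrier_mat n n"
    and "\<And>i j. i < j \<Longrightarrow> j < n \<Longrightarrow> A $$ (i, j) = 0"
    and "\<And>i. i < n \<Longrightarrow> A $$ (i, i) = 1"
  shows "det A = 1"
proof -
  have "det A = prod_list (diag_mat A)"
    by (rule det_lower_triangular[OF assms(2,1)])
  also have "\<dots> = 1"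
    using assms(1,3) by (simp add: prod_list_diag_prod)
  finally show ?thesis .
qed

lemma det_identity_below_row0:
  assumes "A \<in> carrier_mat (Suc m) (Suc m)"
    and "\<And>k l. 1 \<le> k \<Longrightarrow> k < Suc m \<Longrightarrow> l < Suc m \<Longrightarrow> A $$ (k, l) = (if k = l then 1 else 0)"
  shows "det A = A $$ (0, 0)"
proof -
  have "upper_triangular A"
    using assms by (auto simp: upper_triangular_def)
  then have "det A = prod_list (diag_mat A)"
    using assms(1) by (rule det_upper_triangular)
  also have "\<dots> = (\<Prod>i<Suc m. A $$ (i, i))"
    using assms(1) by (simp add: prod_list_diag_prod atLeast0LessThan)
  also have "\<dots> = A $$ (0, 0)"
    using assms(2) by (simp only: prod.lessThan_Suc_shift) simp
  finally show ?thesis .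
qed

definition ballot_mat :: "nat \<Rightarrow> 'a::comm_ring_1 mat" where
  "ballot_mat n = mat n n (\<lambda>(i, k). of_int (ballot i k))"

lemma det_ballot_mat: "det (ballot_mat n) = 1"
  by (rule det_lower_unitriangular[of _ n]) (simp_all add: ballot_mat_def ballot_eq_0)

lemma hankel_eq_ballot_congruence:
  fixes N :: "nat \<Rightarrow> nat \<Rightarrow> 'a::comm_ring_1"
  assumes "\<And>k l. adj_sum (N k) l = adj_sum (\<lambda>k. N k l) k"
  shows "mat n n (\<lambda>(i, j). \<Sum>l\<le>i + j. of_int (ballot (i + j) l) * N 0 l)
       = ballot_mat n * mat n n (\<lambda>(k, l). N k l) * transpose_mat (ballot_mat n)"
proof (rule eq_matI)
  fix i j assume "i < dim_row (ballot_mat n * mat n n (\<lambda>(k, l). N k l) * transpose_mat (ballot_mat n))"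
    and "j < dim_col (ballot_mat n * mat n n (\<lambda>(k, l). N k l) * transpose_mat (ballot_mat n))"
  then have i: "i < n" and j: "j < n"
    by (simp_all add: ballot_mat_def)
  have restrict: "(\<Sum>k<n. of_int (ballot m k) * f k) = (\<Sum>k\<le>m. of_int (ballot m k) * f k)"
    if "m < n" for m and f :: "nat \<Rightarrow> 'a"
    by (rule sum.mono_neutral_right) (use that in \<open>auto simp: ballot_eq_0\<close>)
  have "mat n n (\<lambda>(i, j). \<Sum>l\<le>i + j. of_int (ballot (i + j) l) * N 0 l) $$ (i, j)
      = (\<Sum>l\<le>i + j. of_int (ballot (i + j) l) * N 0 l)"
    using i j by simp
  also have "\<dots> = (\<Sum>k\<le>i. of_int (ballot i k) * (\<Sum>l\<le>j. of_int (ballot j l) * N k l))"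
    by (rule sum_ballot_bilinear[symmetric]) (rule assms)
  also have "\<dots> = (\<Sum>k<n. of_int (ballot i k) * (\<Sum>l<n. of_int (ballot j l) * N k l))"
    using i j by (simp add: restrict)
  also have "\<dots> = (\<Sum>l<n. (\<Sum>k<n. of_int (ballot i k) * N k l) * of_int (ballot j l))"
    by (subst sum_mult_sum_swap) (simp only: mult.commute)
  also have "\<dots> = (ballot_mat n * mat n n (\<lambda>(k, l). N k l) * transpose_mat (ballot_mat n)) $$ (i, j)"
    using i j by (simp add: ballot_mat_def scalar_prod_def atLeast0LessThan)
  finally show "mat n n (\<lambda>(i, j). \<Sum>l\<le>i + j. of_int (ballot (i + j) l) * N 0 l) $$ (i, j)
      = (ballot_mat n * mat n n (\<lambda>(k, l). N k l) * transpose_mat (ballot_mat n)) $$ (i, j)" .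
qed (simp_all add: ballot_mat_def)

lemma det_hankel_ballot:
  fixes N :: "nat \<Rightarrow> nat \<Rightarrow> 'a::comm_ring_1"
  assumes "\<And>k l. adj_sum (N k) l = adj_sum (\<lambda>k. N k l) k"
  shows "det (mat n n (\<lambda>(i, j). \<Sum>l\<le>i + j. of_int (ballot (i + j) l) * N 0 l))
       = det (mat n n (\<lambda>(k, l). N k l))"
proof -
  have B: "ballot_mat n \<in> carrier_mat n n" and N: "mat n n (\<lambda>(k, l). N k l) \<in> carrier_mat n n"
    by (simp_all add: ballot_mat_def)
  show ?thesis
    unfolding hankel_eq_ballot_congruence[OF assms]
    by (simp add: det_mult[OF mult_carrier_mat[OF B N] transpose_carrier_mat[THEN iffD2, OF B]]
        det_mult[OF B N] det_transpose[OF B] det_ballot_mat)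
qed

section \<open>The semiseparable matrix and its determinant\<close>

lemma adj_sum_chebU: "adj_sum (\<lambda>l. chebU (int l) x) l = 2*x * chebU (int l) x"
  using chebU_three_term[of "int l" x] by (auto simp: adj_sum_def of_nat_diff algebra_simps)

definition chebW :: "'a::field_char_0 \<Rightarrow> 'a \<Rightarrow> nat \<Rightarrow> 'a" where
  "chebW X x k = X * chebU (int k) x + chebU (int k - 1) x"

lemma chebW_0 [simp]: "chebW X x 0 = X"
  by (simp add: chebW_def)

lemma adj_sum_chebW: "adj_sum (chebW X x) l = 2*x * chebW X x l + (if l = 0 then 1 else 0)"
proof (cases l)
  case 0
  then show ?thesis by (simp add: adj_sum_def chebW_def chebU_1 algebra_simps)
next
  case (Suc l')
  have U: "chebU (int l + 1) x + chebU (int l - 1) x = 2*x * chebU (int l) x"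
    and U': "chebU (int l) x + chebU (int l - 2) x = 2*x * chebU (int l - 1) x"
    using chebU_rec[of "int l" x] chebU_rec[of "int l - 1" x] \<open>l = Suc l'\<close>
    by (simp_all add: algebra_simps)
  have "adj_sum (chebW X x) l
      = X * (chebU (int l + 1) x + chebU (int l - 1) x) + (chebU (int l) x + chebU (int l - 2) x)"
    using Suc by (simp add: adj_sum_def chebW_def algebra_simps)
  also have "\<dots> = 2*x * chebW X x l"
    unfolding U U' by (simp add: chebW_def algebra_simps)
  finally show ?thesis
    using Suc by simp
qed

lemma chebW_Suc_Suc: "chebW X x (Suc (Suc k)) = 2*x * chebW X x (Suc k) - chebW X x k"
  using adj_sum_chebW[of X x "Suc k"] by (simp add: adj_sum_def eq_diff_eq)

lemma chebW_chebU_wronskian: "chebW X x (Suc k) * chebU (int k) x - chebU (int (Suc k)) x * chebW X x k = 1"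
proof (induction k)
  case 0
  then show ?case by (simp add: chebW_def chebU_1)
next
  case (Suc k)
  have U: "chebU (int (Suc (Suc k))) x = 2*x * chebU (int (Suc k)) x - chebU (int k) x"
    using adj_sum_chebU[of x "Suc k"] by (simp add: adj_sum_def eq_diff_eq)
  have "chebW X x (Suc (Suc k)) * chebU (int (Suc k)) x - chebU (int (Suc (Suc k))) x * chebW X x (Suc k)
      = chebW X x (Suc k) * chebU (int k) x - chebU (int (Suc k)) x * chebW X x k"
    unfolding chebW_Suc_Suc U by (simp add: algebra_simps)
  then show ?case
    using Suc.IH by simp
qed

definition green :: "'a::field_char_0 \<Rightarrow> 'a \<Rightarrow> nat \<Rightarrow> nat \<Rightarrow> 'a" where
  "green X x k l = chebU (int (min k l)) x * chebW X x (max k l)"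

lemma green_commute_less:
  assumes "k < l"
  shows "adj_sum (green X x k) l = adj_sum (\<lambda>k. green X x k l) k"
proof -
  have "adj_sum (green X x k) l = chebU (int k) x * adj_sum (chebW X x) l"
    using assms by (simp add: adj_sum_def green_def min_def max_def algebra_simps)
  also have "\<dots> = adj_sum (\<lambda>k. chebU (int k) x) k * chebW X x l"
    using assms by (simp add: adj_sum_chebW adj_sum_chebU)
  also have "\<dots> = adj_sum (\<lambda>k. green X x k l) k"
    using assms by (simp add: adj_sum_def green_def min_def max_def algebra_simps)
  finally show ?thesis .
qed

lemma green_commute: "adj_sum (green X x k) l = adj_sum (\<lambda>k. green X x k l) k"
proof -
  have sym: "green X x k l = green X x l k" for k l
    by (simp add: green_def min.commute max.commute)
  consider "k < l" | "k = l" | "l < k"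
    by linarith
  then show ?thesis
  proof cases
    case 1
    then show ?thesis by (rule green_commute_less)
  next
    case 2
    then show ?thesis by (simp add: adj_sum_def sym)
  next
    case 3
    have row: "green X x k = (\<lambda>j. green X x j k)" and col: "(\<lambda>j. green X x j l) = green X x l"
      by (simp_all add: fun_eq_iff sym)
    show ?thesis
      unfolding row col by (rule green_commute_less[OF 3, symmetric])
  qed
qed

lemma green_row_op_subdiag:
  "green X x (Suc l) l - 2*x * green X x l l + (if l = 0 then 0 else green X x (l - 1) l) = 1"
proof (cases l)
  case 0
  then show ?thesis by (simp add: green_def chebW_def chebU_1)
next
  case (Suc q)
  have "green X x (Suc l) l - 2*x * green X x l l + green X x (l - 1) l
      = chebU (int (Suc q)) x * (chebW X x (Suc (Suc q)) - 2*x * chebW X x (Suc q))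
        + chebU (int q) x * chebW X x (Suc q)"
    by (simp add: Suc green_def algebra_simps)
  also have "\<dots> = chebW X x (Suc q) * chebU (int q) x - chebU (int (Suc q)) x * chebW X x q"
    unfolding chebW_Suc_Suc by (simp add: algebra_simps)
  finally show ?thesis
    using Suc chebW_chebU_wronskian[of X x q] by simp
qed

lemma green_row_op:
  assumes "k \<ge> 1"
  shows "green X x k l - 2*x * green X x (k - 1) l + (if k < 2 then 0 else green X x (k - 2) l)
       = (if k = Suc l then 1 else 0)"
proof -
  have U: "chebU (int k) x - 2*x * chebU (int (k - 1)) x + (if k < 2 then 0 else chebU (int (k - 2)) x) = 0"
    using chebU_three_term[of "int k - 1" x] assms by (auto simp: of_nat_diff)
  consider "l \<ge> k" | "Suc l = k" | "Suc (Suc l) \<le> k"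
    by linarith
  then show ?thesis
  proof cases
    case 1
    then have "green X x k l - 2*x * green X x (k - 1) l + (if k < 2 then 0 else green X x (k - 2) l)
        = (chebU (int k) x - 2*x * chebU (int (k - 1)) x + (if k < 2 then 0 else chebU (int (k - 2)) x))
          * chebW X x l"
      by (simp add: green_def algebra_simps)
    then show ?thesis using 1 U by simp
  next
    case 2
    then show ?thesis
      using green_row_op_subdiag[of X x l] by auto
  next
    case 3
    then obtain q where k: "k = Suc (Suc q)" and l: "l \<le> q"
      by (metis Suc_le_D Suc_le_mono)
    then have "green X x k l - 2*x * green X x (k - 1) l + (if k < 2 then 0 else green X x (k - 2) l)
        = chebU (int l) x * (chebW X x (Suc (Suc q)) - 2*x * chebW X x (Suc q) + chebW X x q)"
      by (simp add: green_def algebra_simps)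
    then show ?thesis using k l by (simp add: chebW_Suc_Suc)
  qed
qed

definition semisep :: "'a::field_char_0 \<Rightarrow> 'a \<Rightarrow> 'a \<Rightarrow> nat \<Rightarrow> nat \<Rightarrow> 'a" where
  "semisep X x b k l = (if k = l then 1 else 0) + (2*x - b) * green X x k l"

lemma semisep_commute: "adj_sum (semisep X x b k) l = adj_sum (\<lambda>k. semisep X x b k l) k"
proof -
  have linear: "adj_sum (\<lambda>j. f j + t * g j) i = adj_sum f i + t * adj_sum g i" for f g :: "nat \<Rightarrow> 'a" and t i
    by (simp add: adj_sum_def algebra_simps)
  have delta: "adj_sum (\<lambda>l. if k = l then 1 else 0) l = adj_sum (\<lambda>k. if k = l then 1 else (0::'a)) k"
    by (auto simp: adj_sum_def)
  have row: "semisep X x b k = (\<lambda>l. (if k = l then 1 else 0) + (2*x - b) * green X x k l)"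
    by (simp add: fun_eq_iff semisep_def)
  show ?thesis
    unfolding row by (simp only: semisep_def linear delta green_commute)
qed

lemma sum_ballot_semisep_row0:
  "(\<Sum>l\<le>m. of_int (ballot m l) * semisep X x b 0 l)
     = of_int (ballot m 0) + (2*x - b) * ((2*x)^m * X + ballot0_conv (2*x) m)"
proof -
  have "(\<Sum>l\<le>m. of_int (ballot m l) * semisep X x b 0 l)
      = (\<Sum>l\<le>m. (if l = 0 then of_int (ballot m 0) else 0) + (2*x - b) * (of_int (ballot m l) * chebW X x l))"
    by (intro sum.cong) (auto simp: semisep_def green_def algebra_simps)
  also have "\<dots> = of_int (ballot m 0) + (2*x - b) * (\<Sum>l\<le>m. of_int (ballot m l) * chebW X x l)"
    by (simp add: sum.distrib sum_distrib_left)
  also have "(\<Sum>l\<le>m. of_int (ballot m l) * chebW X x l) = (2*x)^m * X + ballot0_conv (2*x) m"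
    using sum_ballot_adj_eigen[of "chebW X x" "2*x" 1 m] by (simp add: adj_sum_chebW)
  finally show ?thesis .
qed

text \<open>The lower triangular Toeplitz matrix of the polynomial \<open>1 + \<alpha> z + z\<^sup>2\<close>.\<close>

definition lower_band :: "'a::comm_ring_1 \<Rightarrow> nat \<Rightarrow> nat \<Rightarrow> 'a" where
  "lower_band \<alpha> k j = (if j = k then 1 else if Suc j = k then \<alpha> else if Suc (Suc j) = k then 1 else 0)"

lemma sum_lower_band:
  assumes "k < n"
  shows "(\<Sum>j<n. lower_band \<alpha> k j * f j)
       = f k + (if k = 0 then 0 else \<alpha> * f (k - 1)) + (if k < 2 then 0 else f (k - 2))"
proof -
  have "(\<Sum>j<n. lower_band \<alpha> k j * f j)
      = (\<Sum>j<n. (if j = k then f k else 0) + (if j = k - 1 then (if k = 0 then 0 else \<alpha> * f (k - 1)) else 0)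
               + (if j = k - 2 then (if k < 2 then 0 else f (k - 2)) else 0))"
    by (intro sum.cong) (auto simp: lower_band_def)
  then show ?thesis
    using assms by (simp add: sum.distrib less_imp_diff_less)
qed

lemma lower_band_chebU_inverse:
  fixes y :: "'a::field_char_0"
  assumes "k < n" "l < n"
  shows "(\<Sum>j<n. lower_band (-2*y) k j * chebU (int j - int l) y) = (if k = l then 1 else 0)"
proof -
  have "(\<Sum>j<n. lower_band (-2*y) k j * chebU (int j - int l) y)
      = chebU (int k - int l) y + (if k = 0 then 0 else -2*y * chebU (int (k - 1) - int l) y)
        + (if k < 2 then 0 else chebU (int (k - 2) - int l) y)"
    using assms(1) by (rule sum_lower_band)
  also have "\<dots> = chebU (int k - int l) y - 2*y * chebU (int k - int l - 1) y + chebU (int k - int l - 2) y"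
    by (auto simp: of_nat_diff algebra_simps)
  also have "\<dots> = (if k = l then 1 else 0)"
    using chebU_three_term[of "int k - int l - 1" y] by (simp add: algebra_simps)
  finally show ?thesis .
qed

lemma semisep_row_reduction:
  assumes "k < n"
  shows "(\<Sum>j<n. lower_band (-2*x) k j * semisep X x b j l)
       = (if k = 0 then semisep X x b 0 l else lower_band (-b) k l)"
proof (cases "k = 0")
  case True
  then show ?thesis using assms by (simp add: sum_lower_band)
next
  case False
  have "(\<Sum>j<n. lower_band (-2*x) k j * semisep X x b j l)
      = semisep X x b k l - 2*x * semisep X x b (k - 1) l + (if k < 2 then 0 else semisep X x b (k - 2) l)"
    using sum_lower_band[OF assms, of "-2*x" "\<lambda>j. semisep X x b j l"] False by simp
  also have "\<dots> = lower_band (-2*x) k l + (2*x - b)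
        * (green X x k l - 2*x * green X x (k - 1) l + (if k < 2 then 0 else green X x (k - 2) l))"
    using False by (auto simp: semisep_def lower_band_def algebra_simps)
  also have "\<dots> = lower_band (-b) k l"
    using green_row_op[of k X x l] False by (simp add: lower_band_def)
  finally show ?thesis
    using False by simp
qed

lemma lower_band_mat_mult_semisep_mat:
  "mat n n (\<lambda>(k, j). lower_band (-2*x) k j) * mat n n (\<lambda>(k, l). semisep X x b k l)
     = mat n n (\<lambda>(k, l). if k = 0 then semisep X x b 0 l else lower_band (-b) k l)"
proof (rule eq_matI)
  fix k l assume "k < dim_row (mat n n (\<lambda>(k, l). if k = 0 then semisep X x b 0 l else lower_band (-b) k l))"
    and "l < dim_col (mat n n (\<lambda>(k, l). if k = 0 then semisep X x b 0 l else lower_band (-b) k l))"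
  then have "k < n" "l < n"
    by simp_all
  then show "(mat n n (\<lambda>(k, j). lower_band (-2*x) k j) * mat n n (\<lambda>(k, l). semisep X x b k l)) $$ (k, l)
      = mat n n (\<lambda>(k, l). if k = 0 then semisep X x b 0 l else lower_band (-b) k l) $$ (k, l)"
    using semisep_row_reduction[of k n x X b l]
    by (simp add: index_mult_mat_mat del: index_mult_mat(1))
qed simp_all

lemma det_semisep:
  fixes X x b :: "'a::field_char_0"
  shows "det (mat (Suc m) (Suc m) (\<lambda>(k, l). semisep X x b k l))
       = (\<Sum>j<Suc m. semisep X x b 0 j * chebU (int j) (b/2))"
proof -
  define n where "n = Suc m"
  define E where "E = mat n n (\<lambda>(k, j). lower_band (-2*x) k j)"
  define N where "N = mat n n (\<lambda>(k, l). semisep X x b k l)"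
  define M where "M = mat n n (\<lambda>(k, l). if k = 0 then semisep X x b 0 l else lower_band (-b) k l)"
  define U where "U = mat n n (\<lambda>(j, l). chebU (int j - int l) (b/2))"
  have carrier: "E \<in> carrier_mat n n" "N \<in> carrier_mat n n" "M \<in> carrier_mat n n" "U \<in> carrier_mat n n"
    by (simp_all add: E_def N_def M_def U_def)
  have "det E = 1"
    using carrier(1) by (rule det_lower_unitriangular) (simp_all add: E_def lower_band_def)
  have "det U = 1"
    using carrier(4) by (rule det_lower_unitriangular) (simp_all add: U_def)
  have "E * N = M"
    unfolding E_def N_def M_def by (rule lower_band_mat_mult_semisep_mat)
  have "det N = det (E * N)"
    using \<open>det E = 1\<close> by (simp add: det_mult[OF carrier(1,2)])
  also have "\<dots> = det (M * U)"
    using \<open>det U = 1\<close> by (simp add: \<open>E * N = M\<close> det_mult[OF carrier(3,4)])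
  also have "\<dots> = (M * U) $$ (0, 0)"
  proof (rule det_identity_below_row0)
    show "M * U \<in> carrier_mat (Suc m) (Suc m)"
      using carrier by (simp add: n_def)
    fix k l assume "1 \<le> k" "k < Suc m" "l < Suc m"
    then show "(M * U) $$ (k, l) = (if k = l then 1 else 0)"
      using lower_band_chebU_inverse[of k n l "b/2"]
      by (simp add: M_def U_def n_def index_mult_mat_mat del: index_mult_mat(1))
  qed
  also have "\<dots> = (\<Sum>j<Suc m. semisep X x b 0 j * chebU (int j) (b/2))"
    by (simp add: M_def U_def n_def index_mult_mat_mat del: index_mult_mat(1))
  finally show ?thesis
    by (simp add: N_def n_def)
qed

lemma sum_semisep_row0_chebU:
  fixes X x b :: "'a::field_char_0"
  shows "(\<Sum>j<Suc m. semisep X x b 0 j * chebU (int j) (b/2))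
       = chebU (int m) (b/2) * chebW X x (Suc m) - chebU (int m + 1) (b/2) * chebW X x m"
proof (induction m)
  case 0
  then show ?case by (simp add: semisep_def green_def chebW_def chebU_1 algebra_simps)
next
  case (Suc m)
  have U: "chebU (int (Suc m) + 1) (b/2) = b * chebU (int (Suc m)) (b/2) - chebU (int m) (b/2)"
    using chebU_rec[of "int (Suc m)" "b/2"] by simp
  have "(\<Sum>j<Suc (Suc m). semisep X x b 0 j * chebU (int j) (b/2))
      = chebU (int m) (b/2) * chebW X x (Suc m) - chebU (int m + 1) (b/2) * chebW X x m
        + (2*x - b) * chebW X x (Suc m) * chebU (int (Suc m)) (b/2)"
    using Suc.IH by (simp add: semisep_def green_def)
  also have "\<dots> = chebU (int (Suc m)) (b/2) * chebW X x (Suc (Suc m))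
      - chebU (int (Suc m) + 1) (b/2) * chebW X x (Suc m)"
    unfolding U chebW_Suc_Suc by (simp add: algebra_simps)
  finally show ?case .
qed

lemma hankel_entry_eq_sum_ballot_semisep:
  fixes X x b :: "'a::field_char_0"
  shows "X * (2*x)^(m + 1) + (\<Sum>k=0..m div 2. (2*x)^(m - 2*k) * catalan k)
          - b * (X * (2*x)^m
                 + (\<Sum>k\<in>{0..(int m - 1) div 2}. (2*x)^(nat (int m - 2*k - 1)) * catalan (nat k)))
       = (\<Sum>l\<le>m. of_int (ballot m l) * semisep X x b 0 l)"
  unfolding sum_catalan_eq_ballot0_conv sum_catalan_odd_eq_ballot0_conv ballot0_conv_Suc
    sum_ballot_semisep_row0
  by (simp add: algebra_simps)

theorem theorem15:
  fixes X a b :: "'a :: field_char_0" and n :: nat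
  assumes "n \<ge> 1"
  shows "det (mat n n (\<lambda>(i,j).
            X * (-2*a)^(i+j+1) + (\<Sum>k=0..(i+j) div 2. (-2*a)^(i+j-2*k) * catalan k)
          - b * (X * (-2*a)^(i+j)
                 + (\<Sum>k\<in>{0..(int (i+j) - 1) div 2}. (-2*a)^(nat (int (i+j) - 2*k - 1)) * catalan (nat k)))))
       = chebU (int n - 1) (b/2) * (X * chebU (int n) (-a) + chebU (int n - 1) (-a))
         - chebU (int n) (b/2) * (X * chebU (int n - 1) (-a) + chebU (int n - 2) (-a))"
  (is "det ?H = _")
proof -
  obtain m where n: "n = Suc m"
    using assms by (cases n) auto
  have "-2*a = 2*(-a)"
    by simp
  then have "?H = mat n n (\<lambda>(i, j). \<Sum>l\<le>i + j. of_int (ballot (i + j) l) * semisep X (-a) b 0 l)"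
    by (simp only: hankel_entry_eq_sum_ballot_semisep)
  then have "det ?H = det (mat n n (\<lambda>(k, l). semisep X (-a) b k l))"
    by (simp add: det_hankel_ballot semisep_commute)
  also have "\<dots> = chebU (int m) (b/2) * chebW X (-a) (Suc m) - chebU (int m + 1) (b/2) * chebW X (-a) m"
    unfolding n det_semisep sum_semisep_row0_chebU ..
  finally show ?thesis
    by (simp add: n chebW_def algebra_simps)
qed

end
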